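(* Let $s\ge1$, $m_1,n_1>0$, and $1<n_2<m_2$. Let $n(x)=n_1(x+n_2)^N$ and $m(x)=m_1(x+m_2)^M$. If $M>\frac{N+1+s}{2}$, $0<N<1$ and $$m_2^{1-N}>\frac{m_1n_1+Mm_1^2n_1+n_1^2}{m_1^2},$$ then $$(1+n'(x))m^2(x)-(1+m'(x))m(x)n(x)-(x+1)^s n^2(x)>0\quad\text{for all }x\ge0.$$ *)

theory Defs
  imports "HOL-Analysis.Analysis"
begin

end

theory Submission
  imports Defs
begin

text \<open>Put \<open>b = x + m2 > 1\<close>. Since \<open>x + n2\<close> and \<open>x + 1\<close> are at most \<open>b\<close>, each of the
  three negative terms \<open>m n\<close>, \<open>m' m n\<close>, \<open>(x + 1)\<^sup>s n\<^sup>2\<close> is at most its coefficient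
  \<open>m1 n1\<close>, \<open>M m1\<^sup>2 n1\<close>, \<open>n1\<^sup>2\<close> times \<open>b\<^bsup>2M - 1 + N\<^esup>\<close>; this is where \<open>2M > N + 1 + s\<close> enters.
  On the other hand \<open>m\<^sup>2 = m1\<^sup>2 b\<^bsup>1 - N\<^esup> b\<^bsup>2M - 1 + N\<^esup>\<close>, and \<open>m1\<^sup>2 b\<^bsup>1 - N\<^esup> \<ge> m1\<^sup>2 m2\<^bsup>1 - N\<^esup>\<close>
  exceeds the sum of the three coefficients by hypothesis. The term \<open>n' m\<^sup>2\<close> is nonnegative.\<close>

lemma deriv_scaled_shifted_powr:
  fixes c d r x :: real
  assumes "x + d > 0"
  shows "deriv (\<lambda>x. c * (x + d) powr r) x = c * r * (x + d) powr (r - 1)"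
proof (rule DERIV_imp_deriv)
  have "((\<lambda>x. x + d) has_real_derivative 1) (at x)"
    by (auto intro!: derivative_eq_intros)
  from DERIV_chain2[OF has_real_derivative_powr[OF assms] this]
  have "((\<lambda>x. (x + d) powr r) has_real_derivative r * (x + d) powr (r - 1)) (at x)"
    by simp
  from DERIV_cmult[OF this, of c]
  show "((\<lambda>x. c * (x + d) powr r) has_real_derivative c * r * (x + d) powr (r - 1)) (at x)"
    by (simp add: mult.assoc)
qed

lemma powr_dominated_by_larger_base:
  fixes a b p q :: real
  assumes "0 \<le> a" "a \<le> b" "1 \<le> b" "0 \<le> p" "p \<le> q"
  shows "a powr p \<le> b powr q"
  using assms by (meson order.trans powr_mono powr_mono2)

lemma powr_mult_eq_powr:
  fixes x p q r :: real
  assumes "p + q = r"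
  shows "x powr p * x powr q = x powr r"
  unfolding assms[symmetric] by (rule powr_add[symmetric])

lemma square_term_dominates:
  fixes a b t s m1 n1 M N :: real
  assumes "0 \<le> a" "a \<le> b" "0 \<le> t" "t \<le> b" "1 \<le> b"
    and "m1 > 0" "n1 > 0" "0 \<le> N" "1 \<le> s" "N + 1 + s \<le> 2 * M"
    and coeff: "m1 * n1 + M * m1^2 * n1 + n1^2 < m1^2 * b powr (1 - N)"
  shows "(1 + n1 * N * a powr (N - 1)) * (m1 * b powr M)^2
           - (1 + m1 * M * b powr (M - 1)) * (m1 * b powr M) * (n1 * a powr N)
           - t powr s * (n1 * a powr N)^2 > 0"
proof -
  define B where "B = b powr (2 * M - 1 + N)"
  have "M \<ge> 1" using assms by linarith
  have B_pos: "B > 0" using \<open>1 \<le> b\<close> by (simp add: B_def)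
  have square: "(m1 * b powr M)^2 = m1^2 * b powr (1 - N) * B"
  proof -
    have "(m1 * b powr M)^2 = m1^2 * (b powr M * b powr M)"
      by (simp add: power2_eq_square)
    also have "b powr M * b powr M = b powr (1 - N) * B"
      using powr_mult_eq_powr[of M M "2 * M" b] powr_mult_eq_powr[of "1 - N" "2 * M - 1 + N" "2 * M" b]
      by (simp add: B_def)
    finally show ?thesis by simp
  qed
  have mixed: "b powr M * a powr N \<le> B"
  proof -
    have "b powr M * a powr N \<le> b powr M * b powr (M - 1 + N)"
      using assms \<open>M \<ge> 1\<close> by (intro mult_left_mono powr_dominated_by_larger_base) auto
    also have "\<dots> = B"
      unfolding B_def by (rule powr_mult_eq_powr) simp
    finally show ?thesis .
  qed
  have derivative: "b powr (M - 1) * b powr M * a powr N \<le> B"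
  proof -
    have "b powr (M - 1) * b powr M * a powr N \<le> b powr (2 * M - 1) * b powr N"
      using assms powr_mult_eq_powr[of "M - 1" M "2 * M - 1" b]
      by (intro mult_mono powr_dominated_by_larger_base) auto
    also have "\<dots> = B"
      unfolding B_def by (rule powr_mult_eq_powr) simp
    finally show ?thesis .
  qed
  have tail: "t powr s * (a powr N)^2 \<le> B"
  proof -
    have "t powr s * (a powr N)^2 \<le> b powr s * (b powr N * b powr N)"
      using assms by (auto simp: power2_eq_square intro!: mult_mono powr_mono2)
    also have "\<dots> = b powr (s + 2 * N)"
      using powr_mult_eq_powr[of N N "2 * N" b] powr_mult_eq_powr[of s "2 * N" "s + 2 * N" b] by simp
    also have "\<dots> \<le> B"
      using assms unfolding B_def by (intro powr_mono) auto
    finally show ?thesis .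
  qed
  have expansion: "(1 + n1 * N * a powr (N - 1)) * (m1 * b powr M)^2
           - (1 + m1 * M * b powr (M - 1)) * (m1 * b powr M) * (n1 * a powr N)
           - t powr s * (n1 * a powr N)^2
      = (m1 * b powr M)^2 + n1 * N * a powr (N - 1) * (m1 * b powr M)^2
        - m1 * n1 * (b powr M * a powr N)
        - M * m1^2 * n1 * (b powr (M - 1) * b powr M * a powr N)
        - n1^2 * (t powr s * (a powr N)^2)"
    by (simp add: algebra_simps power2_eq_square)
  have "(m1 * n1 + M * m1^2 * n1 + n1^2) * B < (m1 * b powr M)^2"
    unfolding square using coeff B_pos by simp
  then have "m1 * n1 * B + M * m1^2 * n1 * B + n1^2 * B < (m1 * b powr M)^2"
    by (simp only: distrib_right)
  moreover have "n1 * N * a powr (N - 1) * (m1 * b powr M)^2 \<ge> 0"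
    using assms by simp
  moreover have "m1 * n1 * (b powr M * a powr N) \<le> m1 * n1 * B"
    using mixed assms by simp
  moreover have "M * m1^2 * n1 * (b powr (M - 1) * b powr M * a powr N) \<le> M * m1^2 * n1 * B"
    using derivative assms \<open>M \<ge> 1\<close> by simp
  moreover have "n1^2 * (t powr s * (a powr N)^2) \<le> n1^2 * B"
    using tail by (simp add: mult_left_mono)
  ultimately show ?thesis
    unfolding expansion by linarith
qed

theorem lemma4p1:
  fixes s m1 n1 m2 n2 M N :: real
    and n m :: "real \<Rightarrow> real"
  assumes "s \<ge> 1" and "m1 > 0" and "n1 > 0"
    and "1 < n2" and "n2 < m2"
    and n_def: "\<And>x. n x = n1 * (x + n2) powr N"
    and m_def: "\<And>x. m x = m1 * (x + m2) powr M"
    and "M > (N + 1 + s) / 2" and "0 < N" and "N < 1"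
    and "m2 powr (1 - N) > (m1 * n1 + M * m1^2 * n1 + n1^2) / m1^2"
  shows "\<forall>x \<ge> 0. (1 + deriv n x) * (m x)^2 - (1 + deriv m x) * m x * n x
                     - (x + 1) powr s * (n x)^2 > 0"
proof (intro allI impI)
  fix x :: real
  assume "x \<ge> 0"
  have "n = (\<lambda>x. n1 * (x + n2) powr N)" "m = (\<lambda>x. m1 * (x + m2) powr M)"
    using n_def m_def by auto
  then have derivs: "deriv n x = n1 * N * (x + n2) powr (N - 1)"
    "deriv m x = m1 * M * (x + m2) powr (M - 1)"
    using assms \<open>x \<ge> 0\<close> by (simp_all add: deriv_scaled_shifted_powr)
  have "m2 powr (1 - N) \<le> (x + m2) powr (1 - N)"
    using assms \<open>x \<ge> 0\<close> by (intro powr_mono2) auto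
  then have "m1^2 * m2 powr (1 - N) \<le> m1^2 * (x + m2) powr (1 - N)"
    by (simp add: mult_left_mono)
  moreover have "m1 * n1 + M * m1^2 * n1 + n1^2 < m1^2 * m2 powr (1 - N)"
    using assms by (simp add: pos_divide_less_eq mult.commute)
  ultimately have coeff: "m1 * n1 + M * m1^2 * n1 + n1^2 < m1^2 * (x + m2) powr (1 - N)"
    by linarith
  have "N + 1 + s \<le> 2 * M"
    using assms(8) by simp
  moreover have "0 \<le> x + n2" "x + n2 \<le> x + m2" "0 \<le> x + 1" "x + 1 \<le> x + m2" "1 \<le> x + m2"
    using assms(4,5) \<open>x \<ge> 0\<close> by linarith+
  ultimately have "(1 + n1 * N * (x + n2) powr (N - 1)) * (m1 * (x + m2) powr M)^2
      - (1 + m1 * M * (x + m2) powr (M - 1)) * (m1 * (x + m2) powr M) * (n1 * (x + n2) powr N)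
      - (x + 1) powr s * (n1 * (x + n2) powr N)^2 > 0"
    using assms(1-3,9) coeff by (intro square_term_dominates) auto
  then show "(1 + deriv n x) * (m x)^2 - (1 + deriv m x) * m x * n x
               - (x + 1) powr s * (n x)^2 > 0"
    by (simp only: derivs n_def m_def)
qed

end
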